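(* For all integers $t\ge 4$ and $r\ge 3$, $C_r(n,M_t)=\Omega\!\left(n^{\frac{1}{2r+1}}\right)$ as $n\to\infty$, where $M_t$ is the $r$-graph consisting of $t$ pairwise disjoint edges.
   Context: An $r$-graph is an $r$-uniform hypergraph; $K_n^{(r)}$ is the complete $r$-graph on $n$ vertices. A copy of an $r$-graph $H$ in $K_n^{(r)}$ is a subhypergraph isomorphic to $H$. An $(n,r,H)$-local coloring with $k$ colors is a family of edge-colorings $f_v:E(K_n^{(r)})\to[k]$, one per vertex $v$, such that for every copy $T$ of $H$ there is $u\in V(T)$ with $f_u$ injective on $E(T)$. $C_r(n,H)$ is the minimum such $k$. *)

theory Defs
  imports Complex_Main
begin

text \<open>Vertices of K_n^(r) are 0..n-1; an edge is an r-subset of them.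
  An r-graph H is given by its edge set (a set of vertex sets) over type 'a;
  its vertex set is the union of its edges.\<close>

definition complete_edges :: "nat \<Rightarrow> nat \<Rightarrow> nat set set" where
  "complete_edges n r = {e. e \<subseteq> {..<n} \<and> card e = r}"

definition hverts :: "'a set set \<Rightarrow> 'a set" where
  "hverts H = \<Union>H"

text \<open>A copy of H in K_n^(r): the image of H under an injective vertex map
  into {..<n} (its edges are then automatically edges of K_n^(r) whenever H is an r-graph).\<close>
definition is_copy :: "nat \<Rightarrow> nat \<Rightarrow> 'a set set \<Rightarrow> nat set set \<Rightarrow> bool" where
  "is_copy n r H T \<longleftrightarrow> T \<subseteq> complete_edges n r \<and>
     (\<exists>\<phi>. inj_on \<phi> (hverts H) \<and> \<phi> ` hverts H \<subseteq> {..<n} \<and> T = (\<lambda>e. \<phi> ` e) ` H)"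

definition local_coloring :: "nat \<Rightarrow> nat \<Rightarrow> 'a set set \<Rightarrow> nat \<Rightarrow> (nat \<Rightarrow> nat set \<Rightarrow> nat) \<Rightarrow> bool" where
  "local_coloring n r H k f \<longleftrightarrow>
     (\<forall>v<n. \<forall>e\<in>complete_edges n r. f v e < k) \<and>
     (\<forall>T. is_copy n r H T \<longrightarrow> (\<exists>u\<in>hverts T. inj_on (f u) T))"

definition C_local :: "nat \<Rightarrow> nat \<Rightarrow> 'a set set \<Rightarrow> nat" where
  "C_local r n H = (LEAST k. \<exists>f. local_coloring n r H k f)"

definition matching :: "nat \<Rightarrow> nat \<Rightarrow> nat set set" where
  "matching r t = (\<lambda>i. {r*i..<r*i + r}) ` {..<t}"

end

theory Submission
  imports Defs "HOL-Library.FuncSet" "HOL-Library.Disjoint_Sets"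
begin

text \<open>
  Fix a local coloring with k colors. Split off 2k disjoint low r-blocks D_0, ..., D_(2k-1); every
  remaining vertex u colors them with k colors, so f_u agrees on at least k pairs of low blocks, and
  averaging over the at most 4k^2 pairs yields a pair D_i, D_j on which f_u agrees for a 1/(4k)
  fraction of the remaining vertices. Pack k^(2r) + t - 3 disjoint edges into that fraction. Their
  color profiles on the at most 2r vertices of D_i and D_j take at most k^(2r) values, so two of them,
  E_a and E_b, get equal colors from every f_u with u in D_i or D_j. Then D_i, D_j, E_a, E_b and
  t - 4 further packed edges form a copy of M_t on which no f_u is injective. Hence
  n < 2kr + 4kr(k^(2r) + t - 3) = O(k^(2r+1)), i.e. k = Omega(n^(1/(2r+1))).
\<close>

section \<open>Blocks of consecutive vertices\<close>

definition block :: "nat \<Rightarrow> nat \<Rightarrow> nat set" where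
  "block r i = {r*i..<r*i + r}"

lemma matching_eq_blocks: "matching r t = block r ` {..<t}"
  by (simp add: matching_def block_def)

lemma block_eq_image: "block r i = (+) (r*i) ` {..<r}"
  by (simp add: block_def atLeast0LessThan[symmetric] add.commute)

lemma finite_block [simp]: "finite (block r i)"
  by (simp add: block_def)

lemma card_block [simp]: "card (block r i) = r"
  by (simp add: block_def)

lemma block_subset_lessThan:
  assumes "i < m"
  shows "block r i \<subseteq> {..<r*m}"
proof -
  have "r*i + r \<le> r*m"
    using assms mult_le_mono2[of "Suc i" m r] by simp
  then show ?thesis by (auto simp: block_def)
qed

lemma block_in_complete_edges:
  assumes "i < m" "r * m \<le> n"
  shows "block r i \<in> complete_edges n r"
  using block_subset_lessThan[OF assms(1), of r] assms(2) by (auto simp: complete_edges_def)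

lemma mem_block_iff:
  assumes "0 < r"
  shows "x \<in> block r i \<longleftrightarrow> x div r = i"
proof -
  have "r * (x div r) \<le> x" "x < r * (x div r) + r"
    using mult_div_mod_eq[of r x] mod_less_divisor[OF assms, of x] by linarith+
  then show ?thesis
    using assms by (auto simp: block_def div_nat_eqI mult.commute)
qed

lemma disjoint_family_block: "disjoint_family (block r)"
proof (cases "r = 0")
  case False
  then show ?thesis by (auto simp: disjoint_family_on_def mem_block_iff)
qed (simp add: disjoint_family_on_def block_def)

lemma lessThan_mult_eq_UN_block: "{..<r*t} = (\<Union>l<t. block r l)"
proof (induction t)
  case (Suc t)
  have "{..<r*Suc t} = {..<r*t} \<union> block r t"
    by (auto simp: block_def)
  then show ?case
    using Suc by (simp add: lessThan_Suc Un_commute)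
qed simp

lemma hverts_matching: "hverts (matching r t) = {..<r*t}"
  by (simp add: hverts_def matching_eq_blocks lessThan_mult_eq_UN_block)

section \<open>Counting lemmas\<close>

lemma exists_map_blocks_onto:
  assumes F: "\<forall>l<t. finite (F l) \<and> card (F l) = r" and disj: "disjoint_family_on F {..<t}"
  obtains \<phi> where "inj_on \<phi> {..<r*t}" "\<forall>l<t. \<phi> ` block r l = F l"
proof -
  have "\<exists>\<beta>. bij_betw \<beta> {..<r} (F l)" if "l < t" for l
    using ex_bij_betw_nat_finite[of "F l"] F that by (simp add: atLeast0LessThan)
  then obtain b where b: "\<And>l. l < t \<Longrightarrow> bij_betw (b l) {..<r} (F l)"
    by metis
  define \<phi> where "\<phi> x = b (x div r) (x mod r)" for x
  have onto: "\<phi> ` block r l = F l" if "l < t" for l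
  proof -
    have "\<phi> ` block r l = b l ` {..<r}"
      unfolding block_eq_image image_image by (rule image_cong) (auto simp: \<phi>_def)
    then show ?thesis
      using b[OF that] by (simp add: bij_betw_def)
  qed
  \<comment> \<open>injectivity by counting: the image is a disjoint union of t sets of size r\<close>
  have "card (\<phi> ` {..<r*t}) = card (\<Union>l<t. F l)"
    unfolding lessThan_mult_eq_UN_block image_UN using onto by simp
  also have "\<dots> = r*t"
    using F disj by (subst card_UN_disjoint) (auto simp: disjoint_family_on_def)
  finally have "inj_on \<phi> {..<r*t}"
    by (intro eq_card_imp_inj_on) simp_all
  with onto show ?thesis
    using that by blast
qed

lemma exists_disjoint_subsets:
  assumes "finite S" "r * m \<le> card S"
  obtains E where "\<forall>x<m. E x \<subseteq> S \<and> card (E x) = r" "disjoint_family_on E {..<m}"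
proof -
  obtain \<gamma> where \<gamma>: "bij_betw \<gamma> {..<card S} S"
    using ex_bij_betw_nat_finite[OF assms(1)] by (auto simp: atLeast0LessThan)
  have sub: "block r x \<subseteq> {..<card S}" if "x < m" for x
    using block_subset_lessThan[OF that, of r] assms(2) by auto
  have inj: "inj_on \<gamma> {..<card S}"
    using \<gamma> by (simp add: bij_betw_def)
  have subsets: "\<gamma> ` block r x \<subseteq> S \<and> card (\<gamma> ` block r x) = r" if "x < m" for x
  proof
    show "\<gamma> ` block r x \<subseteq> S"
      using sub[OF that] \<gamma> by (auto simp: bij_betw_def)
    show "card (\<gamma> ` block r x) = r"
      using card_image[OF inj_on_subset[OF inj sub[OF that]]] by simp
  qed
  have "disjoint_family_on (\<lambda>x. \<gamma> ` block r x) {..<m}"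
    unfolding disjoint_family_on_def
  proof (intro ballI impI)
    fix x y assume "x \<in> {..<m}" "y \<in> {..<m}" "x \<noteq> y"
    then have "\<gamma> ` block r x \<inter> \<gamma> ` block r y = \<gamma> ` (block r x \<inter> block r y)"
      using inj_on_image_Int[OF inj sub sub] by simp
    also have "\<dots> = {}"
      using disjoint_family_block \<open>x \<noteq> y\<close> by (simp add: disjoint_family_on_def)
    finally show "\<gamma> ` block r x \<inter> \<gamma> ` block r y = {}" .
  qed
  with subsets show ?thesis
    by (intro that) auto
qed

lemma disjoint_family_on_append:
  fixes p q :: nat
  assumes "disjoint_family_on D {..<p}" "disjoint_family_on E {..<q}"
    and "\<forall>x<p. \<forall>y<q. D x \<inter> E y = {}"
  shows "disjoint_family_on (\<lambda>l. if l < p then D l else E (l - p)) {..<p + q}"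
  unfolding disjoint_family_on_def
proof (intro ballI impI)
  fix l l' :: nat assume "l \<in> {..<p + q}" "l' \<in> {..<p + q}" "l \<noteq> l'"
  then show "(if l < p then D l else E (l - p)) \<inter> (if l' < p then D l' else E (l' - p)) = {}"
    using assms unfolding disjoint_family_on_def by (auto simp: Int_commute)
qed

lemma disjoint_family_blocks_append:
  assumes "\<forall>y<q. E y \<subseteq> {r*p..}" "disjoint_family_on E {..<q}"
  shows "disjoint_family_on (\<lambda>l. if l < p then block r l else E (l - p)) {..<p + q}"
proof (rule disjoint_family_on_append)
  show "disjoint_family_on (block r) {..<p}"
    by (rule disjoint_family_on_mono[OF subset_UNIV disjoint_family_block])
  show "\<forall>x<p. \<forall>y<q. block r x \<inter> E y = {}"
  proof (intro allI impI)
    fix x y assume "x < p" "y < q"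
    then have "block r x \<subseteq> {..<r*p}" "E y \<subseteq> {r*p..}"
      using block_subset_lessThan assms(1) by auto
    then have "z \<notin> E y" if "z \<in> block r x" for z
      using that by force
    then show "block r x \<inter> E y = {}"
      by blast
  qed
qed (rule assms(2))

lemma card_equal_color_pairs:
  fixes c :: "'a::linorder \<Rightarrow> 'b"
  assumes "finite A"
  shows "card A - card (c ` A) \<le> card {(x, y). x \<in> A \<and> y \<in> A \<and> x < y \<and> c x = c y}"
    (is "_ \<le> card ?pairs")
proof -
  define F where "F = {y\<in>A. \<forall>x\<in>A. x < y \<longrightarrow> c x \<noteq> c y}"
  have "inj_on c F"
  proof
    fix x y assume "x \<in> F" "y \<in> F" "c x = c y"
    then show "x = y"
      unfolding F_def by (cases x y rule: linorder_cases) auto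
  qed
  then have "card F \<le> card (c ` A)"
    using assms by (intro card_inj_on_le) (auto simp: F_def)
  \<comment> \<open>every y that is not the first of its color is paired with an earlier x of the same color\<close>
  define h where "h y = ((SOME x. x \<in> A \<and> x < y \<and> c x = c y), y)" for y
  have "inj_on h (A - F)"
    by (rule inj_onI) (simp add: h_def)
  moreover have "h ` (A - F) \<subseteq> ?pairs"
  proof
    fix p assume "p \<in> h ` (A - F)"
    then obtain y where y: "y \<in> A - F" "p = h y" by blast
    then have "\<exists>x. x \<in> A \<and> x < y \<and> c x = c y"
      by (auto simp: F_def)
    from someI_ex[OF this] show "p \<in> ?pairs"
      using y by (auto simp: h_def)
  qed
  moreover have "finite ?pairs"
    by (rule finite_subset[of _ "A \<times> A"]) (use assms in auto)
  ultimately have "card (A - F) \<le> card ?pairs"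
    by (rule card_inj_on_le)
  moreover have "card (A - F) = card A - card F"
    using assms by (intro card_Diff_subset) (auto simp: F_def intro: finite_subset)
  ultimately show ?thesis
    using \<open>card F \<le> card (c ` A)\<close> by linarith
qed

lemma exists_popular_by_double_counting:
  assumes "finite P" "P \<noteq> {}" "finite B" and often: "\<forall>u\<in>B. k \<le> card {p\<in>P. R p u}"
  shows "\<exists>p\<in>P. k * card B \<le> card P * card {u\<in>B. R p u}"
proof (rule ccontr)
  assume "\<not> ?thesis"
  then have less: "card P * card {u\<in>B. R p u} < k * card B" if "p \<in> P" for p
    using that by auto
  have "k * card B \<le> (\<Sum>u\<in>B. card {p\<in>P. R p u})"
    using sum_mono[of B "\<lambda>_. k"] often by (simp add: mult.commute)
  also have "\<dots> = (\<Sum>p\<in>P. card {u\<in>B. R p u})"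
    using sum.swap_restrict[OF assms(1,3), of "\<lambda>_ _. 1::nat" R] by simp
  finally have "card P * (k * card B) \<le> card P * (\<Sum>p\<in>P. card {u\<in>B. R p u})"
    by simp
  also have "\<dots> = (\<Sum>p\<in>P. card P * card {u\<in>B. R p u})"
    by (simp add: sum_distrib_left)
  also have "\<dots> < (\<Sum>p\<in>P. k * card B)"
    using assms(1,2) less by (intro sum_strict_mono) auto
  finally show False
    by simp
qed

lemma exists_equal_profiles:
  fixes h :: "'a \<Rightarrow> nat \<Rightarrow> nat"
  assumes "finite U" and colors: "\<forall>u\<in>U. \<forall>x<m. h u x < k" and "k ^ card U < m"
  shows "\<exists>x y. x < m \<and> y < m \<and> x \<noteq> y \<and> (\<forall>u\<in>U. h u x = h u y)"
proof -
  define g where "g x = restrict (\<lambda>u. h u x) U" for x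
  have "card (g ` {..<m}) \<le> card (U \<rightarrow>\<^sub>E {..<k})"
    using colors by (intro card_mono finite_PiE assms(1)) (auto simp: g_def)
  also have "\<dots> = k ^ card U"
    by (simp only: card_funcsetE[OF assms(1)] card_lessThan)
  finally have "\<not> inj_on g {..<m}"
    using assms(3) by (intro pigeonhole) simp
  then obtain x y where xy: "x < m" "y < m" "x \<noteq> y" "g x = g y"
    by (auto simp: inj_on_def)
  have "h u x = h u y" if "u \<in> U" for u
    using fun_cong[OF xy(4), of u] that by (simp add: g_def)
  then show ?thesis
    using xy by blast
qed

section \<open>Local colorings of matchings\<close>

lemma is_copy_matching:
  assumes "finite I" "card I = t"
    and edges: "\<forall>l\<in>I. F l \<in> complete_edges n r" and disj: "disjoint_family_on F I"
  shows "is_copy n r (matching r t) (F ` I)"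
proof -
  obtain \<epsilon> where \<epsilon>: "bij_betw \<epsilon> {..<t} I"
    using ex_bij_betw_nat_finite[OF assms(1)] assms(2) by (auto simp: atLeast0LessThan)
  then have edges_\<epsilon>: "\<forall>l<t. F (\<epsilon> l) \<in> complete_edges n r"
    using edges by (auto simp: bij_betw_def)
  have "\<forall>l<t. finite (F (\<epsilon> l)) \<and> card (F (\<epsilon> l)) = r"
    using edges_\<epsilon> by (auto simp: complete_edges_def intro: finite_subset)
  moreover have "disjoint_family_on (\<lambda>l. F (\<epsilon> l)) {..<t}"
    using disj \<epsilon> by (auto simp: disjoint_family_on_def bij_betw_def inj_on_def)
  ultimately obtain \<phi> where inj: "inj_on \<phi> {..<r*t}" and onto: "\<forall>l<t. \<phi> ` block r l = F (\<epsilon> l)"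
    by (rule exists_map_blocks_onto)
  have "\<phi> ` {..<r*t} = (\<Union>l<t. F (\<epsilon> l))"
    unfolding lessThan_mult_eq_UN_block image_UN using onto by simp
  also have "\<dots> \<subseteq> {..<n}"
    using edges_\<epsilon> by (auto simp: complete_edges_def)
  finally have "\<phi> ` {..<r*t} \<subseteq> {..<n}" .
  moreover have "F ` I = (\<lambda>e. \<phi> ` e) ` matching r t"
    using \<epsilon> onto by (auto simp: matching_eq_blocks bij_betw_def image_image)
  moreover have "F ` I \<subseteq> complete_edges n r"
    using edges by blast
  ultimately show ?thesis
    unfolding is_copy_def hverts_matching using inj by blast
qed

lemma local_coloring_no_blocked_matching:
  assumes lc: "local_coloring n r (matching r t) k f"
    and "finite I" "card I = t"
    and edges: "\<forall>l\<in>I. F l \<in> complete_edges n r" and disj: "disjoint_family_on F I"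
    and ij: "i \<in> I" "j \<in> I" "i \<noteq> j" and ab: "a \<in> I" "b \<in> I" "a \<noteq> b"
    and agree_ij: "\<forall>l\<in>I - {i, j}. \<forall>u\<in>F l. f u (F i) = f u (F j)"
    and agree_ab: "\<forall>u\<in>F i \<union> F j. f u (F a) = f u (F b)"
  shows False
proof -
  have "is_copy n r (matching r t) (F ` I)"
    using is_copy_matching[OF assms(2-3) edges disj] .
  then obtain u where "u \<in> hverts (F ` I)" and inj: "inj_on (f u) (F ` I)"
    using lc by (auto simp: local_coloring_def)
  then obtain l where l: "l \<in> I" "u \<in> F l"
    by (auto simp: hverts_def)
  have card_F: "finite (F x) \<and> card (F x) = r" if "x \<in> I" for x
    using edges that by (auto simp: complete_edges_def intro: finite_subset)
  have "r \<noteq> 0"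
    using card_F[OF l(1)] l(2) by (auto simp: card_gt_0_iff)
  have distinct: "F x \<noteq> F y" if "x \<in> I" "y \<in> I" "x \<noteq> y" for x y
  proof -
    have "F x \<noteq> {}"
      using card_F[OF that(1)] \<open>r \<noteq> 0\<close> by auto
    moreover have "F x \<inter> F y = {}"
      using disj that unfolding disjoint_family_on_def by blast
    ultimately show ?thesis
      by auto
  qed
  show False
  proof (cases "l \<in> {i, j}")
    case True
    then have "f u (F a) = f u (F b)"
      using agree_ab l(2) by auto
    then have "F a = F b"
      using inj ab by (simp add: inj_on_def)
    then show False
      using distinct ab by blast
  next
    case False
    then have "f u (F i) = f u (F j)"
      using agree_ij l by auto
    then have "F i = F j"
      using inj ij by (simp add: inj_on_def)
    then show False
      using distinct ij by blast
  qed
qed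

lemma local_coloring_no_blocked_blocks:
  assumes lc: "local_coloring n r (matching r t) k f" and "4 \<le> t"
    and ij: "i < j" "j < p" "r * p \<le> n"
    and E: "\<forall>x<q. E x \<in> complete_edges n r \<and> E x \<subseteq> {r*p..}" and disj_E: "disjoint_family_on E {..<q}"
    and ab: "a < m" "b < m" "a \<noteq> b" "m + t - 4 \<le> q"
    and agree_ij: "\<forall>x<q. \<forall>u\<in>E x. f u (block r i) = f u (block r j)"
    and agree_ab: "\<forall>u\<in>block r i \<union> block r j. f u (E a) = f u (E b)"
  shows False
proof -
  define F where "F l = (if l < p then block r l else E (l - p))" for l
  define J where "J = {a, b} \<union> {m..<m + t - 4}"
  define I where "I = {i, j} \<union> (+) p ` J"
  have I_sub: "I \<subseteq> {..<p + q}"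
    using ij ab \<open>4 \<le> t\<close> by (auto simp: I_def J_def)
  have "disjoint_family_on F {..<p + q}"
    unfolding F_def using disj_E by (intro disjoint_family_blocks_append) (use E in auto)
  then have disj: "disjoint_family_on F I"
    by (rule disjoint_family_on_mono[OF I_sub])
  have edges: "\<forall>l\<in>I. F l \<in> complete_edges n r"
  proof
    fix l assume "l \<in> I"
    then have "l < p + q"
      using I_sub by auto
    then show "F l \<in> complete_edges n r"
      using E block_in_complete_edges[OF _ ij(3)] by (auto simp: F_def)
  qed
  have "card J = t - 2"
    using ab \<open>4 \<le> t\<close> unfolding J_def by (subst card_Un_disjoint) auto
  then have "card ((+) p ` J) = t - 2"
    by (simp add: card_image)
  moreover have "{i, j} \<inter> (+) p ` J = {}"
    using ij by auto
  ultimately have card_I: "card I = t"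
    using ij \<open>4 \<le> t\<close> unfolding I_def by (subst card_Un_disjoint) (auto simp: J_def)
  have agree_I: "\<forall>l\<in>I - {i, j}. \<forall>u\<in>F l. f u (F i) = f u (F j)"
  proof
    fix l assume "l \<in> I - {i, j}"
    then obtain x where "x \<in> J" "l = p + x"
      by (auto simp: I_def)
    moreover have "x < q" if "x \<in> J"
      using that ab \<open>4 \<le> t\<close> by (auto simp: J_def)
    ultimately show "\<forall>u\<in>F l. f u (F i) = f u (F j)"
      using agree_ij ij by (simp add: F_def)
  qed
  have agree_p: "\<forall>u\<in>F i \<union> F j. f u (F (p + a)) = f u (F (p + b))"
    using agree_ab ij by (simp add: F_def)
  have mem: "finite I" "i \<in> I" "j \<in> I" "p + a \<in> I" "p + b \<in> I"
    by (simp_all add: I_def J_def)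
  show False
    by (rule local_coloring_no_blocked_matching[OF lc mem(1) card_I edges disj mem(2,3) _ mem(4,5) _
          agree_I agree_p]) (use ij ab in simp_all)
qed

lemma local_coloring_popular_pair:
  fixes f :: "nat \<Rightarrow> nat set \<Rightarrow> nat"
  assumes colors: "\<forall>v<n. \<forall>e\<in>complete_edges n r. f v e < k" and "1 \<le> k" and "2*k*r \<le> n"
  obtains i j where "i < j" "j < 2*k"
    "n - 2*k*r \<le> 4*k * card {u\<in>{2*k*r..<n}. f u (block r i) = f u (block r j)}"
proof -
  define A where "A = {..<2*k}"
  define B where "B = {2*k*r..<n}"
  define pairs where "pairs = {(i, j). i \<in> A \<and> j \<in> A \<and> i < j}"
  define R where "R = (\<lambda>(i, j) u. f u (block r i) = f u (block r j))"
  have "finite pairs"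
    by (rule finite_subset[of _ "A \<times> A"]) (auto simp: pairs_def A_def)
  have "card pairs \<le> card (A \<times> A)"
    by (rule card_mono) (auto simp: pairs_def A_def)
  then have card_pairs: "card pairs \<le> 4*k*k"
    by (simp add: A_def card_cartesian_product)
  have "\<forall>u\<in>B. k \<le> card {p\<in>pairs. R p u}"
  proof
    fix u assume "u \<in> B"
    define c where "c i = f u (block r i)" for i
    have "c ` A \<subseteq> {..<k}"
      using colors \<open>u \<in> B\<close> assms(3) block_in_complete_edges[of _ "2*k" r n]
      by (auto simp: c_def A_def B_def mult.commute)
    then have "card (c ` A) \<le> k"
      using card_mono[of "{..<k}"] by fastforce
    then have "k \<le> card A - card (c ` A)"
      by (simp add: A_def)
    also have "\<dots> \<le> card {(x, y). x \<in> A \<and> y \<in> A \<and> x < y \<and> c x = c y}"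
      by (rule card_equal_color_pairs) (simp add: A_def)
    also have "{(x, y). x \<in> A \<and> y \<in> A \<and> x < y \<and> c x = c y} = {p\<in>pairs. R p u}"
      by (auto simp: pairs_def R_def c_def)
    finally show "k \<le> card {p\<in>pairs. R p u}" .
  qed
  moreover have "(0, 1) \<in> pairs"
    using assms(2) by (simp add: pairs_def A_def)
  ultimately obtain p where p: "p \<in> pairs" "k * card B \<le> card pairs * card {u\<in>B. R p u}"
    using exists_popular_by_double_counting[OF \<open>finite pairs\<close> _ finite_atLeastLessThan] B_def by blast
  note p(2)
  also have "card pairs * card {u\<in>B. R p u} \<le> 4*k*k * card {u\<in>B. R p u}"
    using card_pairs by (rule mult_le_mono1)
  finally have "k * card B \<le> k * (4*k * card {u\<in>B. R p u})"
    by (simp add: ac_simps)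
  then have "card B \<le> 4*k * card {u\<in>B. R p u}"
    using assms(2) by simp
  then show ?thesis
    using that p(1) by (auto simp: pairs_def A_def B_def R_def)
qed

lemma local_coloring_agreeing_edges:
  fixes f :: "nat \<Rightarrow> nat set \<Rightarrow> nat"
  assumes colors: "\<forall>v<n. \<forall>e\<in>complete_edges n r. f v e < k" and "1 \<le> k"
    and n_ge: "2*k*r + 4*k*r*q \<le> n"
  obtains i j E where "i < j" "j < 2*k"
    "\<forall>x<q. E x \<in> complete_edges n r \<and> E x \<subseteq> {r*(2*k)..}" "disjoint_family_on E {..<q}"
    "\<forall>x<q. \<forall>u\<in>E x. f u (block r i) = f u (block r j)"
proof -
  obtain i j where ij: "i < j" "j < 2*k"
    and popular: "n - 2*k*r \<le> 4*k * card {u\<in>{2*k*r..<n}. f u (block r i) = f u (block r j)}"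
    using local_coloring_popular_pair[OF colors \<open>1 \<le> k\<close>] n_ge by auto
  define Bs where "Bs = {u\<in>{2*k*r..<n}. f u (block r i) = f u (block r j)}"
  have "4*k*r*q \<le> n - 2*k*r"
    using n_ge by linarith
  also have "\<dots> \<le> 4*k * card Bs"
    using popular by (simp add: Bs_def)
  finally have "4*k * (r * q) \<le> 4*k * card Bs"
    by (simp add: mult.assoc)
  then have "r * q \<le> card Bs"
    using \<open>1 \<le> k\<close> by simp
  then obtain E where E: "\<forall>x<q. E x \<subseteq> Bs \<and> card (E x) = r" and "disjoint_family_on E {..<q}"
    using exists_disjoint_subsets[of Bs r q] by (auto simp: Bs_def)
  moreover have "\<forall>x<q. E x \<in> complete_edges n r \<and> E x \<subseteq> {r*(2*k)..}"
    using E by (auto simp: complete_edges_def Bs_def mult.commute)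
  moreover have "\<forall>x<q. \<forall>u\<in>E x. f u (block r i) = f u (block r j)"
    using E by (auto simp: Bs_def)
  ultimately show ?thesis
    using that ij by blast
qed

lemma local_coloring_matching_bound:
  fixes f :: "nat \<Rightarrow> nat set \<Rightarrow> nat"
  assumes lc: "local_coloring n r (matching r t) k f" and "4 \<le> t" "1 \<le> k"
  shows "n < 2*k*r + 4*k*r*(k^(2*r) + t - 3)"
proof (rule ccontr)
  assume "\<not> ?thesis"
  then have n_ge: "2*k*r + 4*k*r*(k^(2*r) + t - 3) \<le> n"
    by simp
  have colors: "\<forall>v<n. \<forall>e\<in>complete_edges n r. f v e < k"
    using lc by (simp add: local_coloring_def)
  \<comment> \<open>one more than the number of color profiles on the at most 2r vertices of two low blocks\<close>
  define m where "m = k^(2*r) + 1"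
  have "2*k*r + 4*k*r*(m + t - 4) \<le> n"
    using n_ge \<open>4 \<le> t\<close> by (simp add: m_def)
  then obtain i j E where ij: "i < j" "j < 2*k"
    and E: "\<forall>x<m + t - 4. E x \<in> complete_edges n r \<and> E x \<subseteq> {r*(2*k)..}"
    and disj_E: "disjoint_family_on E {..<m + t - 4}"
    and agree_ij: "\<forall>x<m + t - 4. \<forall>u\<in>E x. f u (block r i) = f u (block r j)"
    by (rule local_coloring_agreeing_edges[OF colors \<open>1 \<le> k\<close>])
  have low: "r * (2*k) \<le> n"
    using n_ge by (simp add: mult.commute)
  define U where "U = block r i \<union> block r j"
  have U_low: "U \<subseteq> {..<n}"
    using block_subset_lessThan[of i "2*k" r] block_subset_lessThan[of j "2*k" r] ij low
    by (auto simp: U_def)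
  have "card U \<le> 2*r"
    using card_Un_le[of "block r i" "block r j"] by (simp add: U_def)
  then have "k ^ card U < m"
    using \<open>1 \<le> k\<close> power_increasing[of "card U" "2*r" k] by (simp add: m_def)
  moreover have "\<forall>u\<in>U. \<forall>x<m. f u (E x) < k"
  proof (intro ballI allI impI)
    fix u x assume "u \<in> U" "x < m"
    then have "u < n" "E x \<in> complete_edges n r"
      using U_low E \<open>4 \<le> t\<close> by auto
    then show "f u (E x) < k"
      using colors by blast
  qed
  ultimately obtain a b where ab: "a < m" "b < m" "a \<noteq> b" and agree_ab: "\<forall>u\<in>U. f u (E a) = f u (E b)"
    using exists_equal_profiles[of U m "\<lambda>u x. f u (E x)" k] by (auto simp: U_def simp del: Un_iff)
  show False
    using local_coloring_no_blocked_blocks[OF lc \<open>4 \<le> t\<close> ij low E disj_E ab _ agree_ij]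
      agree_ab by (simp add: U_def)
qed

lemma local_coloring_exists:
  assumes "hverts H \<noteq> {}"
  shows "\<exists>k f. local_coloring n r H k f"
proof -
  have "finite (complete_edges n r)"
    by (rule finite_subset[of _ "Pow {..<n}"]) (auto simp: complete_edges_def)
  then obtain g where g: "bij_betw g (complete_edges n r) {0..<card (complete_edges n r)}"
    using ex_bij_betw_finite_nat by blast
  have "\<exists>u\<in>hverts T. inj_on g T" if "is_copy n r H T" for T
  proof -
    obtain \<phi> where "T \<subseteq> complete_edges n r" "T = (\<lambda>e. \<phi> ` e) ` H"
      using \<open>is_copy n r H T\<close> unfolding is_copy_def by blast
    moreover have "hverts ((\<lambda>e. \<phi> ` e) ` H) = \<phi> ` hverts H"
      by (auto simp: hverts_def)
    ultimately show ?thesis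
      using assms g by (auto simp: bij_betw_def intro: inj_on_subset)
  qed
  then have "local_coloring n r H (card (complete_edges n r)) (\<lambda>_. g)"
    using g by (auto simp: local_coloring_def bij_betw_def)
  then show ?thesis
    by blast
qed

lemma local_coloring_C_local:
  assumes "\<exists>k f. local_coloring n r H k f"
  shows "\<exists>f. local_coloring n r H (C_local r n H) f"
  unfolding C_local_def by (rule LeastI_ex) (use assms in blast)

lemma local_coloring_colors_pos:
  assumes "local_coloring n r H k f" "0 < r" "r \<le> n"
  shows "0 < k"
proof -
  have "{..<r} \<in> complete_edges n r"
    using assms(3) by (auto simp: complete_edges_def)
  then show ?thesis
    using assms unfolding local_coloring_def by (metis gr0I less_le_trans not_less_zero)
qed

section \<open>The asymptotic bound\<close>

lemma matching_bound_le_power: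
  fixes k r t :: nat
  assumes "1 \<le> k"
  shows "2*k*r + 4*k*r*(k^(2*r) + t - 3) \<le> (4*t + 6) * r * k^(2*r + 1)"
proof -
  have k_le: "k \<le> k^(2*r + 1)"
    using assms by (metis le_add2 power_increasing power_one_right)
  have "2*k*r + 4*k*r*(k^(2*r) + t - 3) \<le> 2*r*k + 4*r*(k * k^(2*r)) + 4*r*t*k"
    by (simp add: algebra_simps)
  also have "\<dots> \<le> 2*r*k^(2*r + 1) + 4*r*k^(2*r + 1) + 4*r*t*k^(2*r + 1)"
    using k_le by (intro add_mono mult_le_mono2) simp_all
  also have "\<dots> = (4*t + 6) * r * k^(2*r + 1)"
    by (simp add: algebra_simps)
  finally show ?thesis .
qed

lemma C_local_matching_lower_bound:
  assumes "4 \<le> t" "0 < r" "r \<le> n"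
  shows "0 < C_local r n (matching r t)"
    and "n < (4*t + 6) * r * C_local r n (matching r t) ^ (2*r + 1)"
proof -
  have "0 \<in> hverts (matching r t)"
    using assms by (simp add: hverts_matching)
  then obtain f where lc: "local_coloring n r (matching r t) (C_local r n (matching r t)) f"
    using local_coloring_C_local local_coloring_exists by (metis empty_iff)
  then show pos: "0 < C_local r n (matching r t)"
    using assms local_coloring_colors_pos by blast
  then have "1 \<le> C_local r n (matching r t)"
    by simp
  then show "n < (4*t + 6) * r * C_local r n (matching r t) ^ (2*r + 1)"
    using order_less_le_trans[OF local_coloring_matching_bound[OF lc assms(1)] matching_bound_le_power]
    by blast
qed

lemma powr_le_of_le_mult_power:
  fixes x L y :: real
  assumes "0 \<le> x" "0 < L" "0 < y" "0 < m" "x \<le> L * y ^ m"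
  shows "x powr (1 / m) \<le> L powr (1 / m) * y"
proof -
  have "x powr (1 / m) \<le> (L * y ^ m) powr (1 / m)"
    using assms by (intro powr_mono2) simp_all
  also have "\<dots> = L powr (1 / m) * (y powr m) powr (1 / m)"
    using assms by (simp add: powr_mult powr_realpow)
  also have "\<dots> = L powr (1 / m) * y"
    using assms by (simp add: powr_powr)
  finally show ?thesis .
qed

theorem corollary1:
  fixes t r :: nat
  assumes "t \<ge> 4" and "r \<ge> 3"
  shows "\<exists>c>0. \<exists>N. \<forall>n\<ge>N.
           real (C_local r n (matching r t)) \<ge> c * real n powr (1 / (2 * real r + 1))"
proof -
  define L where "L = real ((4*t + 6) * r)"
  define e where "e = 1 / real (2*r + 1)"
  have "0 < L"
    using assms by (simp add: L_def)
  have "L powr -e * real n powr e \<le> real (C_local r n (matching r t))" if "r \<le> n" for n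
  proof -
    define C where "C = C_local r n (matching r t)"
    have "0 < C" "real n \<le> L * real C ^ (2*r + 1)"
      using C_local_matching_lower_bound[OF \<open>t \<ge> 4\<close> _ that] assms
      by (simp_all add: C_def L_def flip: of_nat_mult of_nat_power)
    then have "real n powr e \<le> L powr e * real C"
      unfolding e_def using \<open>0 < L\<close> by (intro powr_le_of_le_mult_power) simp_all
    then show ?thesis
      using \<open>0 < L\<close> by (simp add: C_def powr_minus field_simps)
  qed
  moreover have "e = 1 / (2 * real r + 1)"
    by (simp add: e_def)
  ultimately show ?thesis
    using \<open>0 < L\<close> by (intro exI[of _ "L powr -e"]) auto
qed

end
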